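(* Let $K_i(v)=K_{0i}e^{-v^2/(2\sigma_{K_i}^2)}$ ($i=1,2$) and $a(v_1,v_2)=a_0e^{-(v_1-v_2)^2/(2\sigma_a^2)}$ with all constants positive, and consider $$\begin{aligned}\dot x_1&=x_1\Big[r_1\Big(1-\frac{x_1}{K_1(u_1)}\Big)-\frac{a(u_1,u_2)x_2}{1+ha(u_1,u_2)x_1}\Big],\\ \dot x_2&=x_2\Big[\frac{ea(u_1,u_2)x_1}{1+ha(u_1,u_2)x_1}-d+r_2\Big(1-\frac{x_2}{K_2(u_2)}\Big)\Big],\\ \dot u_1&=\sigma_1^2\Big[-\frac{r_1x_1u_1}{\sigma_{K_1}^2K_1(u_1)}+\frac{(u_1-u_2)x_2a(u_1,u_2)}{\sigma_a^2(1+ha(u_1,u_2)x_1)^2}\Big],\\ \dot u_2&=\sigma_2^2\Big[-\frac{r_2x_2u_2}{\sigma_{K_2}^2K_2(u_2)}+\frac{e(u_1-u_2)x_1a(u_1,u_2)}{\sigma_a^2(1+ha(u_1,u_2)x_1)^2}\Big],\end{aligned}$$ with $r_1,r_2,h,e,\sigma_1,\sigma_2>0$, $d\ge0$. (i) If $r_2+\frac{ea_0K_{01}}{1+a_0hK_{01}}<d$, then the strategy $(0,0)$ of the boundary equilibrium $(K_{01},0,0,0)$ is the unique ESS of the system. (ii) Assume $\sigma_{K_2}>\sigma_{K_1}$, and let $(x_1^*,x_2^*,0,0)$ with $x_1^*,x_2^*>0$ be an equilibrium of the system. If $K_{02}a_0<\frac{r_1}{1-\frac{d}{r_2}}$, $K_{01}a_0<\frac{1}{h}$,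 $\min\{\frac{2r_2}{K_{02}},\frac{r_1}{\sigma_{K_1}^2K_{01}}\}>a_0$, $\frac{r_1r_2}{K_{01}K_{02}}+\frac{ea_0^2}{(1+a_0hK_{01})^3}>a_0^2hK_{02}(r_2+\frac{e}{h})$, $\frac{\sigma_{K_2}}{\sigma_{K_1}}\sqrt{\frac{r_1eK_{02}}{r_2K_{01}}}>\frac{x_2^*}{x_1^*}$ and $\frac{\sigma_a^2}{\sigma_{K_1}\sigma_{K_2}}>\sqrt{\frac{eK_{01}K_{02}}{r_1r_2}}\,a_0$, then the strategy $(0,0)$ of $(x_1^*,x_2^*,0,0)$ is the unique ESS of the system.
   Context: Fitness functions: $G_1(v_1,u,x)=r_1(1-\frac{x_1}{K_1(v_1)})-\frac{a(v_1,u_2)x_2}{1+ha(v_1,u_2)x_1}$ and $G_2(v_2,u,x)=\frac{ea(u_1,v_2)x_1}{1+ha(u_1,v_2)x_1}-d+r_2(1-\frac{x_2}{K_2(v_2)})$. For an equilibrium $(x^*,u^* )$ of the system, $u^*$ is an evolutionary stable strategy (ESS) if $(x^*,u^* )$ is locally asymptotically stable for the four-dimensional system and, for $i=1,2$, $\max_{v_i\in\mathbb R}G_i(v_i,u^*,x^* )=G_i(u_i^*,u^*,x^* )=0$ when $x_1^*,x_2^*>0$, respectively $\max_{v_i\in\mathbb R}G_i(v_i,u^*,x^* )=G_i(u_i^*,u^*,x^* )\le0$ when $x_1^*x_2^*=0$. "Unique ESS" means that it is an ESS and no other equilibrium of the system has an ESS strategy. *)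

theory Defs
  imports "HOL-Analysis.Analysis"
begin

record params =
  pK01 :: real
  pK02 :: real
  psK1 :: real
  psK2 :: real
  pa0  :: real
  psa  :: real
  pr1  :: real
  pr2  :: real
  ph   :: real
  pe   :: real
  pd   :: real
  ps1  :: real
  ps2  :: real

definition K1 :: "params \<Rightarrow> real \<Rightarrow> real" where
  "K1 P v = pK01 P * exp (- (v\<^sup>2) / (2 * (psK1 P)\<^sup>2))"

definition K2 :: "params \<Rightarrow> real \<Rightarrow> real" where
  "K2 P v = pK02 P * exp (- (v\<^sup>2) / (2 * (psK2 P)\<^sup>2))"

definition acoef :: "params \<Rightarrow> real \<Rightarrow> real \<Rightarrow> real" where
  "acoef P v1 v2 = pa0 P * exp (- ((v1 - v2)\<^sup>2) / (2 * (psa P)\<^sup>2))"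

definition G1 :: "params \<Rightarrow> real \<Rightarrow> real \<Rightarrow> real \<Rightarrow> real \<Rightarrow> real \<Rightarrow> real" where
  "G1 P v1 u1 u2 x1 x2 =
     pr1 P * (1 - x1 / K1 P v1) - acoef P v1 u2 * x2 / (1 + ph P * acoef P v1 u2 * x1)"

definition G2 :: "params \<Rightarrow> real \<Rightarrow> real \<Rightarrow> real \<Rightarrow> real \<Rightarrow> real \<Rightarrow> real" where
  "G2 P v2 u1 u2 x1 x2 =
     pe P * acoef P u1 v2 * x1 / (1 + ph P * acoef P u1 v2 * x1) - pd P
     + pr2 P * (1 - x2 / K2 P v2)"

definition field :: "params \<Rightarrow> real \<times> real \<times> real \<times> real \<Rightarrow> real \<times> real \<times> real \<times> real" where
  "field P s = (case s of (x1, x2, u1, u2) \<Rightarrow>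
     let a = acoef P u1 u2 in
     ( x1 * (pr1 P * (1 - x1 / K1 P u1) - a * x2 / (1 + ph P * a * x1)),
       x2 * (pe P * a * x1 / (1 + ph P * a * x1) - pd P + pr2 P * (1 - x2 / K2 P u2)),
       (ps1 P)\<^sup>2 * (- (pr1 P * x1 * u1) / ((psK1 P)\<^sup>2 * K1 P u1)
                     + (u1 - u2) * x2 * a / ((psa P)\<^sup>2 * (1 + ph P * a * x1)\<^sup>2)),
       (ps2 P)\<^sup>2 * (- (pr2 P * x2 * u2) / ((psK2 P)\<^sup>2 * K2 P u2)
                     + pe P * (u1 - u2) * x1 * a / ((psa P)\<^sup>2 * (1 + ph P * a * x1)\<^sup>2))))"

definition is_equilibrium :: "params \<Rightarrow> real \<times> real \<times> real \<times> real \<Rightarrow> bool" where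
  "is_equilibrium P p \<longleftrightarrow> field P p = 0"

definition solution_on :: "params \<Rightarrow> real \<Rightarrow> (real \<Rightarrow> real \<times> real \<times> real \<times> real) \<Rightarrow> bool" where
  "solution_on P T y \<longleftrightarrow>
     (\<forall>t\<in>{0..T}. (y has_vector_derivative field P (y t)) (at t within {0..T}))"

definition global_solution :: "params \<Rightarrow> (real \<Rightarrow> real \<times> real \<times> real \<times> real) \<Rightarrow> bool" where
  "global_solution P y \<longleftrightarrow>
     (\<forall>t\<ge>0. (y has_vector_derivative field P (y t)) (at t within {0..}))"

definition loc_asym_stable :: "params \<Rightarrow> real \<times> real \<times> real \<times> real \<Rightarrow> bool" where
  "loc_asym_stable P p \<longleftrightarrow>
     (\<forall>\<epsilon>>0. \<exists>\<delta>>0. \<forall>T y. T \<ge> 0 \<and> solution_on P T y \<and> dist (y 0) p < \<delta> \<longrightarrow>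
         (\<forall>t\<in>{0..T}. dist (y t) p < \<epsilon>)) \<and>
     (\<exists>\<delta>>0. \<forall>y. global_solution P y \<and> dist (y 0) p < \<delta> \<longrightarrow> (y \<longlongrightarrow> p) at_top)"

definition ESS :: "params \<Rightarrow> real \<Rightarrow> real \<Rightarrow> real \<Rightarrow> real \<Rightarrow> bool" where
  "ESS P x1 x2 u1 u2 \<longleftrightarrow>
     is_equilibrium P (x1, x2, u1, u2) \<and> loc_asym_stable P (x1, x2, u1, u2) \<and>
     x1 \<ge> 0 \<and> x2 \<ge> 0 \<and>
     (\<forall>v. G1 P v u1 u2 x1 x2 \<le> G1 P u1 u1 u2 x1 x2) \<and>
     (\<forall>v. G2 P v u1 u2 x1 x2 \<le> G2 P u2 u1 u2 x1 x2) \<and>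
     (if x1 > 0 \<and> x2 > 0
      then G1 P u1 u1 u2 x1 x2 = 0 \<and> G2 P u2 u1 u2 x1 x2 = 0
      else G1 P u1 u1 u2 x1 x2 \<le> 0 \<and> G2 P u2 u1 u2 x1 x2 \<le> 0)"

definition unique_ESS :: "params \<Rightarrow> real \<Rightarrow> real \<Rightarrow> real \<Rightarrow> real \<Rightarrow> bool" where
  "unique_ESS P x1 x2 u1 u2 \<longleftrightarrow>
     ESS P x1 x2 u1 u2 \<and>
     (\<forall>y1 y2 w1 w2. ESS P y1 y2 w1 w2 \<longrightarrow> (y1, y2, w1, w2) = (x1, x2, u1, u2))"

end

theory Submission
  imports Defs "HOL-Real_Asymp.Real_Asymp"
begin

text \<open>An equilibrium carrying an ESS is locally asymptotically stable, which excludes the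
  extinction equilibria (they form a continuum of rest points), and its prey trait maximises
  \<open>G1\<close>. If the predator is present, moving the prey trait away from the predator trait lowers
  predation, and this forces both traits to be \<open>0\<close>. Hence the only candidates are
  \<open>(K01, 0, 0, 0)\<close> and coexistence equilibria with traits \<open>(0, 0)\<close>.

  Stability of these candidates follows from a diagonal quadratic Lyapunov function for the
  linearisation. Maximality of \<open>G1\<close> at \<open>0\<close> follows from \<open>exp s \<ge> 1 + s\<close> applied to both
  Gaussians. Uniqueness holds because the prey isocline is decreasing (as \<open>h a0 K01 < 1\<close>), along
  it the predator fitness \<open>G2\<close> is strictly increasing, and it stays below its value at the
  predator-free equilibrium.\<close>

section \<open>Diagonal quadratic Lyapunov functions\<close>

type_synonym state = "real \<times> real \<times> real \<times> real"

definition diag_form :: "state \<Rightarrow> state \<Rightarrow> state \<Rightarrow> real" where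
  "diag_form q z w = (case (q, z, w) of ((q1, q2, q3, q4), (z1, z2, z3, z4), (w1, w2, w3, w4)) \<Rightarrow>
     q1 * z1 * w1 + q2 * z2 * w2 + q3 * z3 * w3 + q4 * z4 * w4)"

lemma diag_form_simp [simp]:
  "diag_form (q1, q2, q3, q4) (z1, z2, z3, z4) (w1, w2, w3, w4) =
     q1 * z1 * w1 + q2 * z2 * w2 + q3 * z3 * w3 + q4 * z4 * w4"
  by (simp add: diag_form_def)

lemma power2_norm_state: "(norm (z1, z2, z3, z4))\<^sup>2 = z1\<^sup>2 + z2\<^sup>2 + z3\<^sup>2 + z4\<^sup>2"
  by (simp add: norm_Pair)

lemma diag_form_add_right: "diag_form q z (w + w') = diag_form q z w + diag_form q z w'"
  by (cases q, cases z, cases w, cases w') (simp add: algebra_simps)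

lemma diag_form_scaleR_right: "diag_form q z (c *\<^sub>R w) = c * diag_form q z w"
  by (cases q, cases z, cases w) (simp add: algebra_simps)

lemma abs_diag_form_le:
  assumes "0 \<le> q1" "0 \<le> q2" "0 \<le> q3" "0 \<le> q4"
  shows "\<bar>diag_form (q1, q2, q3, q4) z w\<bar> \<le> (q1 + q2 + q3 + q4) * norm z * norm w"
proof -
  obtain z1 z2 z3 z4 w1 w2 w3 w4 where zw: "z = (z1, z2, z3, z4)" "w = (w1, w2, w3, w4)"
    by (cases z, cases w) auto
  have comp: "\<bar>c\<bar> \<le> norm v" if "c\<^sup>2 \<le> (norm v)\<^sup>2" for c :: real and v :: state
    using that by (metis abs_le_square_iff abs_norm_cancel)
  have summand: "\<bar>a * b * c\<bar> \<le> a * norm z * norm w" if "0 \<le> a" "\<bar>b\<bar> \<le> norm z" "\<bar>c\<bar> \<le> norm w"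
    for a b c :: real
    using that by (simp add: abs_mult mult_mono mult_left_mono)
  have "\<bar>z1\<bar> \<le> norm z" "\<bar>z2\<bar> \<le> norm z" "\<bar>z3\<bar> \<le> norm z" "\<bar>z4\<bar> \<le> norm z"
       "\<bar>w1\<bar> \<le> norm w" "\<bar>w2\<bar> \<le> norm w" "\<bar>w3\<bar> \<le> norm w" "\<bar>w4\<bar> \<le> norm w"
    by (rule comp, simp add: zw power2_norm_state)+
  with assms have "\<bar>q1 * z1 * w1\<bar> + \<bar>q2 * z2 * w2\<bar> + \<bar>q3 * z3 * w3\<bar> + \<bar>q4 * z4 * w4\<bar>
      \<le> (q1 + q2 + q3 + q4) * norm z * norm w"
    using summand[of q1 z1 w1] summand[of q2 z2 w2] summand[of q3 z3 w3] summand[of q4 z4 w4]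
    by (simp add: distrib_right)
  then show ?thesis
    unfolding zw diag_form_simp by (smt (verit) abs_triangle_ineq)
qed

lemma weighted_squares_ge:
  assumes "m \<le> c1" "m \<le> c2" "m \<le> c3" "m \<le> c4"
  shows "m * (norm (z1, z2, z3, z4))\<^sup>2 \<le> c1 * z1\<^sup>2 + c2 * z2\<^sup>2 + c3 * z3\<^sup>2 + c4 * z4\<^sup>2"
proof -
  have "m * a\<^sup>2 \<le> c * a\<^sup>2" if "m \<le> c" for c a :: real
    using that by (simp add: mult_right_mono)
  with assms show ?thesis
    by (simp add: power2_norm_state distrib_left add_mono)
qed

lemma diag_form_self_ge:
  assumes "m \<le> q1" "m \<le> q2" "m \<le> q3" "m \<le> q4"
  shows "m * (norm z)\<^sup>2 \<le> diag_form (q1, q2, q3, q4) z z"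
  using weighted_squares_ge[OF assms] by (cases z) (simp add: power2_eq_square mult.assoc)

lemma has_derivative_diag_form_self:
  "((\<lambda>z. diag_form q z z) has_derivative (\<lambda>h. 2 * diag_form q z h)) (at z within S)"
  by (cases q) (auto simp: diag_form_def split_beta algebra_simps intro!: derivative_eq_intros)

lemma diag_form_decay_along_solution:
  fixes f :: "state \<Rightarrow> state" and y :: "real \<Rightarrow> state"
  assumes sol: "\<And>t. t \<in> {0..T} \<Longrightarrow> (y has_vector_derivative f (y t)) (at t within {0..T})"
    and decay: "\<And>t. 0 < t \<Longrightarrow> t < s \<Longrightarrow>
        2 * diag_form q (y t - p) (f (y t)) \<le> - k * diag_form q (y t - p) (y t - p)"
    and s: "0 \<le> s" "s \<le> T"
  shows "diag_form q (y s - p) (y s - p) \<le> diag_form q (y 0 - p) (y 0 - p) * exp (- k * s)"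
proof -
  let ?V = "\<lambda>t. diag_form q (y t - p) (y t - p)"
  let ?W = "\<lambda>t. ?V t * exp (k * t)"
  \<comment> \<open>The hypothesis \<open>decay\<close> says exactly that \<open>?W\<close> is nonincreasing.\<close>
  have V': "(?V has_real_derivative 2 * diag_form q (y t - p) (f (y t))) (at t within {0..T})"
    if "t \<in> {0..T}" for t
  proof -
    have "((\<lambda>t. y t - p) has_derivative (\<lambda>h. h *\<^sub>R f (y t))) (at t within {0..T})"
      using sol[OF that] by (auto simp: has_vector_derivative_def intro!: derivative_eq_intros)
    from diff_chain_within[OF this has_derivative_diag_form_self[of q]]
    have "(?V has_derivative (\<lambda>h. h * (2 * diag_form q (y t - p) (f (y t))))) (at t within {0..T})"
      by (simp add: o_def diag_form_scaleR_right mult.left_commute)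
    then show ?thesis
      by (rule has_derivative_imp_has_field_derivative) simp
  qed
  have W': "(?W has_real_derivative
      (2 * diag_form q (y t - p) (f (y t)) + k * ?V t) * exp (k * t)) (at t within {0..T})"
    if "t \<in> {0..T}" for t
    by (rule derivative_eq_intros V'[OF that] refl | simp add: algebra_simps)+
  have "?W s \<le> ?W 0"
  proof (rule DERIV_nonpos_imp_decreasing_open[OF s(1)])
    show "continuous_on {0..s} ?W"
      using s by (intro continuous_on_subset[OF DERIV_continuous_on[OF W']]) auto
    fix t assume t: "0 < t" "t < s"
    have "at t within {0..T} = at t"
      using t s by (intro at_within_interior) auto
    then show "\<exists>D. (?W has_real_derivative D) (at t) \<and> D \<le> 0"
      using W'[of t] decay[OF t] t s
      by (intro exI[of _ "(2 * diag_form q (y t - p) (f (y t)) + k * ?V t) * exp (k * t)"])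
        (simp add: mult_nonpos_nonneg)
  qed
  then show ?thesis
    by (simp add: exp_minus field_simps)
qed

lemma diag_form_solution_stays_in_ball:
  fixes f :: "state \<Rightarrow> state" and y :: "real \<Rightarrow> state"
  assumes sol: "\<And>t. t \<in> {0..T} \<Longrightarrow> (y has_vector_derivative f (y t)) (at t within {0..T})"
    and nonincr: "\<And>x. norm (x - p) < r \<Longrightarrow> diag_form q (x - p) (f x) \<le> 0"
    and coercive: "\<And>z. m * (norm z)\<^sup>2 \<le> diag_form q z z" "0 < m"
    and init: "diag_form q (y 0 - p) (y 0 - p) < m * r\<^sup>2" and "0 < r"
  shows "\<forall>t\<in>{0..T}. norm (y t - p) < r"
proof (rule ccontr)
  let ?V = "\<lambda>t. diag_form q (y t - p) (y t - p)"
  \<comment> \<open>At the first exit time \<open>Inf S\<close> the form is at least \<open>m * r\<^sup>2\<close>, yet it has not increased.\<close>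
  define S where "S = {0..T} \<inter> (\<lambda>t. norm (y t - p)) -` {r..}"
  assume "\<not> (\<forall>t\<in>{0..T}. norm (y t - p) < r)"
  then have "S \<noteq> {}" by (auto simp: S_def not_less)
  have "continuous_on {0..T} y"
    using sol has_vector_derivative_continuous continuous_on_eq_continuous_within by blast
  then have "closed S"
    unfolding S_def by (intro continuous_closed_preimage continuous_intros) auto
  moreover have "bdd_below S"
    by (rule bdd_belowI[of _ 0]) (auto simp: S_def)
  ultimately have exit: "Inf S \<in> S"
    using \<open>S \<noteq> {}\<close> closed_contains_Inf by blast
  have before: "norm (y t - p) < r" if "0 \<le> t" "t < Inf S" for t
    using that cInf_lower[OF _ \<open>bdd_below S\<close>, of t] exit by (force simp: S_def)
  have "m * r\<^sup>2 \<le> m * (norm (y (Inf S) - p))\<^sup>2"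
    using exit \<open>0 < m\<close> \<open>0 < r\<close> by (simp add: S_def power_mono)
  also have "\<dots> \<le> ?V (Inf S)"
    by (rule coercive)
  also have "\<dots> \<le> ?V 0 * exp (- 0 * Inf S)"
  proof (rule diag_form_decay_along_solution[OF sol])
    fix t assume "0 < t" "t < Inf S"
    then show "2 * diag_form q (y t - p) (f (y t)) \<le> - 0 * ?V t"
      using nonincr before by simp
  qed (use exit in \<open>auto simp: S_def\<close>)
  finally show False
    using init by simp
qed

lemma diag_form_decay_near_linearly_stable_point:
  fixes f J :: "state \<Rightarrow> state"
  assumes "f p = 0" and deriv: "(f has_derivative J) (at p)"
    and q: "0 < q1" "0 < q2" "0 < q3" "0 < q4" and c: "0 < c1" "0 < c2" "0 < c3" "0 < c4"
    and neg_def: "\<And>z1 z2 z3 z4. diag_form (q1, q2, q3, q4) (z1, z2, z3, z4) (J (z1, z2, z3, z4))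
                   \<le> - (c1 * z1\<^sup>2 + c2 * z2\<^sup>2 + c3 * z3\<^sup>2 + c4 * z4\<^sup>2)"
  obtains r k where "0 < r" "0 < k"
    "\<And>x. norm (x - p) < r \<Longrightarrow>
       2 * diag_form (q1, q2, q3, q4) (x - p) (f x) \<le> - k * diag_form (q1, q2, q3, q4) (x - p) (x - p)"
proof -
  let ?q = "(q1, q2, q3, q4)"
  define M where "M = q1 + q2 + q3 + q4"
  define mu where "mu = min (min c1 c2) (min c3 c4)"
  have "0 < mu" "0 < M"
    using q c by (simp_all add: mu_def M_def)
  have J_neg: "diag_form ?q z (J z) \<le> - mu * (norm z)\<^sup>2" for z
  proof (cases z)
    case (fields z1 z2 z3 z4)
    have "mu * (norm z)\<^sup>2 \<le> c1 * z1\<^sup>2 + c2 * z2\<^sup>2 + c3 * z3\<^sup>2 + c4 * z4\<^sup>2"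
      unfolding fields by (rule weighted_squares_ge) (simp_all add: mu_def)
    with neg_def[of z1 z2 z3 z4] show ?thesis
      by (simp add: fields)
  qed
  obtain r where "0 < r" and remainder:
      "\<And>x. norm (x - p) < r \<Longrightarrow> norm (f x - f p - J (x - p)) \<le> mu / (2 * M) * norm (x - p)"
    using deriv \<open>0 < mu\<close> \<open>0 < M\<close> unfolding has_derivative_at_alt
    by (metis divide_pos_pos mult_pos_pos zero_less_numeral)
  have "2 * diag_form ?q (x - p) (f x) \<le> - (mu / M) * diag_form ?q (x - p) (x - p)"
    if "norm (x - p) < r" for x
  proof -
    define R where "R = f x - J (x - p)"
    have "diag_form ?q (x - p) R \<le> M * norm (x - p) * norm R"
      using abs_diag_form_le[of q1 q2 q3 q4 "x - p" R] q by (simp add: M_def)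
    also have "\<dots> \<le> M * norm (x - p) * (mu / (2 * M) * norm (x - p))"
      using remainder[OF that] \<open>f p = 0\<close> \<open>0 < M\<close> by (intro mult_left_mono) (simp_all add: R_def)
    also have "\<dots> = mu / 2 * (norm (x - p))\<^sup>2"
      using \<open>0 < M\<close> by (simp add: power2_eq_square)
    finally have "2 * diag_form ?q (x - p) (f x) \<le> - mu * (norm (x - p))\<^sup>2"
      using J_neg[of "x - p"] diag_form_add_right[of ?q "x - p" "J (x - p)" R] by (simp add: R_def)
    also have "\<dots> \<le> - (mu / M) * diag_form ?q (x - p) (x - p)"
    proof -
      have "diag_form ?q (x - p) (x - p) \<le> M * (norm (x - p))\<^sup>2"
        using abs_diag_form_le[of q1 q2 q3 q4 "x - p" "x - p"] q
        by (auto simp: M_def power2_eq_square mult.assoc dest: abs_le_D1)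
      then have "mu * diag_form ?q (x - p) (x - p) \<le> mu * (M * (norm (x - p))\<^sup>2)"
        using \<open>0 < mu\<close> by (intro mult_left_mono) simp_all
      then show ?thesis
        using \<open>0 < M\<close> by (simp add: field_simps)
    qed
    finally show ?thesis .
  qed
  with \<open>0 < r\<close> \<open>0 < mu\<close> \<open>0 < M\<close> show thesis
    by (intro that[of r "mu / M"]) simp_all
qed

lemma diag_form_small_near_zero:
  assumes "0 < \<epsilon>"
  obtains \<delta> where "0 < \<delta>" "\<And>z. norm z < \<delta> \<Longrightarrow> diag_form q z z < \<epsilon>"
proof -
  have "continuous (at 0) (\<lambda>z. diag_form q z z)"
    using has_derivative_diag_form_self has_derivative_continuous by blast
  moreover have "diag_form q 0 0 = 0"
    by (cases q) (simp add: zero_prod_def)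
  ultimately show thesis
    using assms that unfolding continuous_at_eps_delta by (force simp: dist_norm)
qed

lemma diag_form_lyapunov_stable:
  fixes f :: "state \<Rightarrow> state"
  assumes nonincr: "\<And>x. norm (x - p) < r \<Longrightarrow> diag_form q (x - p) (f x) \<le> 0" and "0 < r"
    and coercive: "\<And>z. m * (norm z)\<^sup>2 \<le> diag_form q z z" "0 < m" and "0 < \<epsilon>"
  obtains \<delta> where "0 < \<delta>"
    "\<And>T y t. (\<And>t. t \<in> {0..T} \<Longrightarrow> (y has_vector_derivative f (y t)) (at t within {0..T})) \<Longrightarrow>
       dist (y 0) p < \<delta> \<Longrightarrow> t \<in> {0..T} \<Longrightarrow> dist (y t) p < \<epsilon>"
proof -
  define \<rho> where "\<rho> = min \<epsilon> r"
  have "0 < m * \<rho>\<^sup>2"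
    using assms by (simp add: \<rho>_def)
  then obtain \<delta> where "0 < \<delta>" and small: "\<And>z. norm z < \<delta> \<Longrightarrow> diag_form q z z < m * \<rho>\<^sup>2"
    using diag_form_small_near_zero[where q = q] by blast
  have "dist (y t) p < \<epsilon>"
    if "\<And>t. t \<in> {0..T} \<Longrightarrow> (y has_vector_derivative f (y t)) (at t within {0..T})"
      "dist (y 0) p < \<delta>" "t \<in> {0..T}" for T y t
    using diag_form_solution_stays_in_ball[OF that(1) _ coercive, where r = \<rho>] nonincr small[of "y 0 - p"]
      that(2,3) assms
    by (auto simp: \<rho>_def dist_norm)
  with \<open>0 < \<delta>\<close> show thesis
    by (rule that)
qed

lemma diag_form_solution_tendsto:
  fixes f :: "state \<Rightarrow> state" and y :: "real \<Rightarrow> state"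
  assumes sol: "\<And>T t. t \<in> {0..T} \<Longrightarrow> (y has_vector_derivative f (y t)) (at t within {0..T})"
    and decay: "\<And>x. norm (x - p) < r \<Longrightarrow>
        2 * diag_form q (x - p) (f x) \<le> - k * diag_form q (x - p) (x - p)" and "0 < k"
    and coercive: "\<And>z. m * (norm z)\<^sup>2 \<le> diag_form q z z" "0 < m"
    and init: "diag_form q (y 0 - p) (y 0 - p) < m * r\<^sup>2" and "0 < r"
  shows "(y \<longlongrightarrow> p) at_top"
proof -
  let ?V = "\<lambda>z. diag_form q z z"
  have V_nonneg: "0 \<le> ?V z" for z
    using \<open>0 < m\<close> by (intro order_trans[OF _ coercive(1)]) simp
  have "diag_form q (x - p) (f x) \<le> 0" if "norm (x - p) < r" for x
    using decay[OF that] mult_nonneg_nonneg[OF less_imp_le[OF \<open>0 < k\<close>] V_nonneg[of "x - p"]]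
    by linarith
  then have in_ball: "norm (y t - p) < r" if "0 \<le> t" for t
    using diag_form_solution_stays_in_ball[OF sol _ coercive init \<open>0 < r\<close>, of t] that by auto
  have bound: "norm (y t - p) \<le> sqrt (?V (y 0 - p) / m * exp (- k * t))" if "0 \<le> t" for t
  proof -
    have "m * (norm (y t - p))\<^sup>2 \<le> ?V (y t - p)"
      by (rule coercive)
    also have "\<dots> \<le> ?V (y 0 - p) * exp (- k * t)"
      using that decay in_ball by (intro diag_form_decay_along_solution[OF sol, of t]) simp_all
    finally show ?thesis
      using \<open>0 < m\<close> by (simp add: real_le_rsqrt field_simps)
  qed
  have "((\<lambda>t. exp (- k * t)) \<longlongrightarrow> 0) at_top"
    using \<open>0 < k\<close> by real_asymp
  from tendsto_real_sqrt[OF tendsto_mult_right_zero[OF this, of "?V (y 0 - p) / m"]]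
  have "((\<lambda>t. sqrt (?V (y 0 - p) / m * exp (- k * t))) \<longlongrightarrow> 0) at_top"
    by simp
  then have "((\<lambda>t. y t - p) \<longlongrightarrow> 0) at_top"
    by (rule Lim_null_comparison[rotated]) (use bound in \<open>auto simp: eventually_at_top_linorder\<close>)
  then show ?thesis
    by (rule LIM_zero_cancel)
qed

lemma loc_asym_stable_if_diag_lyapunov:
  assumes eq: "is_equilibrium P p" and deriv: "(field P has_derivative J) (at p)"
    and q: "0 < q1" "0 < q2" "0 < q3" "0 < q4" and c: "0 < c1" "0 < c2" "0 < c3" "0 < c4"
    and neg_def: "\<And>z1 z2 z3 z4. diag_form (q1, q2, q3, q4) (z1, z2, z3, z4) (J (z1, z2, z3, z4))
                   \<le> - (c1 * z1\<^sup>2 + c2 * z2\<^sup>2 + c3 * z3\<^sup>2 + c4 * z4\<^sup>2)"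
  shows "loc_asym_stable P p"
proof -
  let ?q = "(q1, q2, q3, q4)"
  let ?V = "\<lambda>z. diag_form ?q z z"
  obtain r k where "0 < r" "0 < k" and decay:
      "\<And>x. norm (x - p) < r \<Longrightarrow> 2 * diag_form ?q (x - p) (field P x) \<le> - k * ?V (x - p)"
    using diag_form_decay_near_linearly_stable_point[OF _ deriv q c neg_def] eq
    unfolding is_equilibrium_def by blast
  define m where "m = min (min q1 q2) (min q3 q4)"
  have "0 < m"
    using q by (simp add: m_def)
  have coercive: "m * (norm z)\<^sup>2 \<le> ?V z" for z
    by (rule diag_form_self_ge) (simp_all add: m_def)
  have V_nonneg: "0 \<le> ?V z" for z
    using \<open>0 < m\<close> by (intro order_trans[OF _ coercive]) simp
  have nonincr: "diag_form ?q (x - p) (field P x) \<le> 0" if "norm (x - p) < r" for x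
    using decay[OF that] mult_nonneg_nonneg[OF less_imp_le[OF \<open>0 < k\<close>] V_nonneg[of "x - p"]]
    by linarith
  have "\<exists>\<delta>>0. \<forall>T y. T \<ge> 0 \<and> solution_on P T y \<and> dist (y 0) p < \<delta> \<longrightarrow>
           (\<forall>t\<in>{0..T}. dist (y t) p < \<epsilon>)" if "0 < \<epsilon>" for \<epsilon>
  proof -
    obtain \<delta> where "0 < \<delta>" and stable: "\<And>T y t.
        (\<And>t. t \<in> {0..T} \<Longrightarrow> (y has_vector_derivative field P (y t)) (at t within {0..T})) \<Longrightarrow>
        dist (y 0) p < \<delta> \<Longrightarrow> t \<in> {0..T} \<Longrightarrow> dist (y t) p < \<epsilon>"
      using diag_form_lyapunov_stable[OF nonincr \<open>0 < r\<close> coercive \<open>0 < m\<close> \<open>0 < \<epsilon>\<close>] by blast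
    show ?thesis
      using \<open>0 < \<delta>\<close> stable unfolding solution_on_def by blast
  qed
  moreover have "\<exists>\<delta>>0. \<forall>y. global_solution P y \<and> dist (y 0) p < \<delta> \<longrightarrow> (y \<longlongrightarrow> p) at_top"
  proof -
    have "0 < m * r\<^sup>2"
      using \<open>0 < r\<close> \<open>0 < m\<close> by simp
    then obtain \<delta> where "0 < \<delta>" and small: "\<And>z. norm z < \<delta> \<Longrightarrow> ?V z < m * r\<^sup>2"
      using diag_form_small_near_zero[where q = ?q] by blast
    have "(y \<longlongrightarrow> p) at_top" if "global_solution P y" "dist (y 0) p < \<delta>" for y
    proof (rule diag_form_solution_tendsto[OF _ decay \<open>0 < k\<close> coercive \<open>0 < m\<close> _ \<open>0 < r\<close>])
      show "(y has_vector_derivative field P (y t)) (at t within {0..T})" if "t \<in> {0..T}" for T t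
        using that \<open>global_solution P y\<close> unfolding global_solution_def
        by (auto intro: has_vector_derivative_within_subset[where S = "{0..}"])
      show "?V (y 0 - p) < m * r\<^sup>2"
        using small \<open>dist (y 0) p < \<delta>\<close> by (simp add: dist_norm)
    qed
    with \<open>0 < \<delta>\<close> show ?thesis
      by blast
  qed
  ultimately show ?thesis
    unfolding loc_asym_stable_def by blast
qed

lemma triangular_quadratic_lyapunov:
  fixes a b d x y :: real
  assumes "0 < a" "0 < d"
  shows "x * (- a * x - b * y) + (b\<^sup>2 / (a * d) + 1) * y * (- d * y) \<le> - (a / 2) * x\<^sup>2 - d * y\<^sup>2"
proof -
  have "x * (- a * x - b * y) + (b\<^sup>2 / (a * d) + 1) * y * (- d * y)
      = - (a / 2) * x\<^sup>2 - d * y\<^sup>2 - ((a / 2) * (x + b * y / a)\<^sup>2 + b\<^sup>2 / (2 * a) * y\<^sup>2)"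
    using assms by (simp add: power2_eq_square field_simps)
  moreover have "0 \<le> (a / 2) * (x + b * y / a)\<^sup>2 + b\<^sup>2 / (2 * a) * y\<^sup>2"
    using assms by simp
  ultimately show ?thesis
    by linarith
qed

definition positive_params :: "params \<Rightarrow> bool" where
  "positive_params P \<longleftrightarrow> 0 < pK01 P \<and> 0 < pK02 P \<and> 0 < psK1 P \<and> 0 < psK2 P \<and> 0 < pa0 P \<and>
     0 < psa P \<and> 0 < pr1 P \<and> 0 < pr2 P \<and> 0 < ph P \<and> 0 < pe P \<and> 0 < ps1 P \<and> 0 < ps2 P"

lemma positive_paramsD:
  assumes "positive_params P"
  shows "0 < pK01 P" "0 < pK02 P" "0 < psK1 P" "0 < psK2 P" "0 < pa0 P" "0 < psa P"
    "0 < pr1 P" "0 < pr2 P" "0 < ph P" "0 < pe P" "0 < ps1 P" "0 < ps2 P"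
  using assms by (simp_all add: positive_params_def)

lemma field_eq:
  "field P (x1, x2, u1, u2) =
     (x1 * (pr1 P * (1 - x1 / K1 P u1) - acoef P u1 u2 * x2 / (1 + ph P * acoef P u1 u2 * x1)),
      x2 * (pe P * acoef P u1 u2 * x1 / (1 + ph P * acoef P u1 u2 * x1) - pd P
            + pr2 P * (1 - x2 / K2 P u2)),
      (ps1 P)\<^sup>2 * (- (pr1 P * x1 * u1) / ((psK1 P)\<^sup>2 * K1 P u1)
        + (u1 - u2) * x2 * acoef P u1 u2 / ((psa P)\<^sup>2 * (1 + ph P * acoef P u1 u2 * x1)\<^sup>2)),
      (ps2 P)\<^sup>2 * (- (pr2 P * x2 * u2) / ((psK2 P)\<^sup>2 * K2 P u2)
        + pe P * (u1 - u2) * x1 * acoef P u1 u2 / ((psa P)\<^sup>2 * (1 + ph P * acoef P u1 u2 * x1)\<^sup>2)))"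
  by (simp add: field_def Let_def)

lemma K1_pos: "0 < pK01 P \<Longrightarrow> 0 < K1 P v"
  by (simp add: K1_def)

lemma K2_pos: "0 < pK02 P \<Longrightarrow> 0 < K2 P v"
  by (simp add: K2_def)

lemma acoef_pos: "0 < pa0 P \<Longrightarrow> 0 < acoef P v w"
  by (simp add: acoef_def)

lemma K1_zero [simp]: "K1 P 0 = pK01 P"
  by (simp add: K1_def)

lemma K2_zero [simp]: "K2 P 0 = pK02 P"
  by (simp add: K2_def)

lemma acoef_diag [simp]: "acoef P v v = pa0 P"
  by (simp add: acoef_def)

lemma K2_le: "0 < pK02 P \<Longrightarrow> K2 P v \<le> pK02 P"
  by (simp add: K2_def mult_le_cancel_left1)

lemma acoef_le: "0 < pa0 P \<Longrightarrow> acoef P v w \<le> pa0 P"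
  by (simp add: acoef_def mult_le_cancel_left1)

lemma acoef_less:
  assumes "0 < pa0 P" "0 < psa P" "\<bar>w1 - w2\<bar> < \<bar>v1 - v2\<bar>"
  shows "acoef P v1 v2 < acoef P w1 w2"
proof -
  have "(w1 - w2)\<^sup>2 < (v1 - v2)\<^sup>2"
    using power_strict_mono[OF assms(3) abs_ge_zero, of 2] by simp
  then show ?thesis
    using assms(1,2) by (simp add: acoef_def divide_strict_right_mono)
qed

lemma holling_mono:
  fixes a b c :: real
  assumes "0 \<le> a" "a \<le> b" "0 \<le> c"
  shows "a / (1 + c * a) \<le> b / (1 + c * b)"
proof -
  have "a * (1 + c * b) \<le> b * (1 + c * a)"
    using assms by (simp add: algebra_simps)
  with assms show ?thesis
    by (simp add: divide_simps add_pos_nonneg)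
qed

lemma holling_strict_mono:
  fixes a b c :: real
  assumes "0 \<le> a" "a < b" "0 \<le> c"
  shows "a / (1 + c * a) < b / (1 + c * b)"
proof -
  have "a * (1 + c * b) < b * (1 + c * a)"
    using assms by (simp add: algebra_simps)
  with assms show ?thesis
    by (simp add: divide_simps add_pos_nonneg)
qed

definition field_jacobian :: "params \<Rightarrow> real \<Rightarrow> real \<Rightarrow> state \<Rightarrow> state" where
  "field_jacobian P c1 c2 = (\<lambda>(z1, z2, z3, z4).
     let D = 1 + ph P * pa0 P * c1 in
    (z1 * G1 P 0 0 0 c1 c2 + c1 * (- pr1 P * z1 / pK01 P + ph P * (pa0 P)\<^sup>2 * c2 * z1 / D\<^sup>2 - pa0 P * z2 / D),
     z2 * G2 P 0 0 0 c1 c2 + c2 * (pe P * pa0 P * z1 / D\<^sup>2 - pr2 P * z2 / pK02 P),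
     (ps1 P)\<^sup>2 * (- pr1 P * c1 * z3 / ((psK1 P)\<^sup>2 * pK01 P) + (z3 - z4) * c2 * pa0 P / ((psa P)\<^sup>2 * D\<^sup>2)),
     (ps2 P)\<^sup>2 * (- pr2 P * c2 * z4 / ((psK2 P)\<^sup>2 * pK02 P) + pe P * (z3 - z4) * c1 * pa0 P / ((psa P)\<^sup>2 * D\<^sup>2))))"

lemma has_derivative_field:
  assumes "0 < pK01 P" "0 < pK02 P" "0 < psK1 P" "0 < psK2 P" "0 < psa P" "0 < pa0 P" "0 < ph P"
    and "0 \<le> c1"
  shows "(field P has_derivative field_jacobian P c1 c2) (at (c1, c2, 0, 0))"
proof -
  have ne: "pK01 P \<noteq> 0" "pK02 P \<noteq> 0" "psK1 P \<noteq> 0" "psK2 P \<noteq> 0" "psa P \<noteq> 0"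
      "1 + ph P * pa0 P * c1 \<noteq> 0"
    using assms by (auto simp: add_nonneg_eq_0_iff)
  define D where "D = 1 + ph P * pa0 P * c1"
  have "D \<noteq> 0"
    using ne by (simp add: D_def)
  show ?thesis
    unfolding field_def[abs_def] K1_def K2_def acoef_def Let_def case_prod_unfold
    apply (rule has_derivative_eq_rhs)
     apply (rule derivative_eq_intros refl | simp add: ne)+
    apply (rule ext)
    apply (simp add: field_jacobian_def Let_def G1_def G2_def K1_def K2_def acoef_def split_beta
        D_def[symmetric])
    apply (simp add: \<open>D \<noteq> 0\<close> field_simps power2_eq_square)
    apply (simp add: D_def algebra_simps)
    done
qed

section \<open>Equilibria carrying an ESS\<close>

lemma not_loc_asym_stable_extinction: "\<not> loc_asym_stable P (0, 0, u1, u2)"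
proof
  assume "loc_asym_stable P (0, 0, u1, u2)"
  then obtain \<delta> where "0 < \<delta>" and attract:
      "\<And>y. global_solution P y \<and> dist (y 0) (0, 0, u1, u2) < \<delta> \<Longrightarrow> (y \<longlongrightarrow> (0, 0, u1, u2)) at_top"
    unfolding loc_asym_stable_def by blast
  define c :: "real \<times> real \<times> real \<times> real" where "c = (0, 0, u1 + \<delta> / 2, u2)"
  have "field P c = 0"
    by (simp add: c_def field_eq zero_prod_def)
  then have "global_solution P (\<lambda>t. c)"
    by (simp add: global_solution_def)
  moreover have "dist c (0, 0, u1, u2) < \<delta>"
    using \<open>0 < \<delta>\<close> by (simp add: c_def dist_norm norm_Pair)
  ultimately have "((\<lambda>t::real. c) \<longlongrightarrow> (0, 0, u1, u2)) at_top"
    using attract by blast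
  then show False
    using \<open>0 < \<delta>\<close> by (simp add: tendsto_const_iff c_def)
qed

lemma G1_gain_from_weaker_predation:
  assumes "0 < pa0 P" "0 < psa P" "0 < ph P" "0 < pr1 P" "0 \<le> x1" "0 < x2"
    and farther: "\<bar>u1 - u2\<bar> < \<bar>v - u2\<bar>" and "x1 / K1 P v \<le> x1 / K1 P u1"
  shows "G1 P u1 u1 u2 x1 x2 < G1 P v u1 u2 x1 x2"
proof -
  have "acoef P v u2 < acoef P u1 u2"
    using assms(1,2) farther by (rule acoef_less)
  then have "acoef P v u2 / (1 + ph P * x1 * acoef P v u2) < acoef P u1 u2 / (1 + ph P * x1 * acoef P u1 u2)"
    using assms by (intro holling_strict_mono) (simp_all add: acoef_pos less_imp_le)
  from mult_strict_right_mono[OF this \<open>0 < x2\<close>]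
  have "acoef P v u2 * x2 / (1 + ph P * acoef P v u2 * x1) < acoef P u1 u2 * x2 / (1 + ph P * acoef P u1 u2 * x1)"
    by (simp add: ac_simps)
  moreover have "pr1 P * (1 - x1 / K1 P u1) \<le> pr1 P * (1 - x1 / K1 P v)"
    using assms(4,8) by simp
  ultimately show ?thesis
    by (simp add: G1_def)
qed

lemma predator_free_equilibrium:
  assumes P: "positive_params P" and "is_equilibrium P (x1, 0, u1, u2)" "0 < x1"
  shows "x1 = pK01 P \<and> u1 = 0 \<and> u2 = 0"
proof -
  note pos = positive_paramsD[OF P]
  have "0 < K1 P u1" "0 < acoef P u1 u2" "0 < 1 + ph P * acoef P u1 u2 * x1"
    using pos assms by (simp_all add: K1_pos acoef_pos add_pos_pos)
  with pos assms have "x1 = K1 P u1" "u1 = 0" "u2 = u1"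
    by (auto simp: is_equilibrium_def field_eq zero_prod_def field_simps)
  then show ?thesis
    by simp
qed

lemma coexistence_equilibrium_traits:
  assumes P: "positive_params P" and eq: "is_equilibrium P (x1, x2, u1, u2)" and "0 < x1" "0 < x2"
  shows "u1 = 0 \<and> u2 = 0 \<or> 0 < u1 * u2"
proof -
  note pos = positive_paramsD[OF P]
  define D where "D = 1 + ph P * acoef P u1 u2 * x1"
  define X1 where "X1 = pr1 P * x1 / ((psK1 P)\<^sup>2 * K1 P u1)"
  define Y1 where "Y1 = x2 * acoef P u1 u2 / ((psa P)\<^sup>2 * D\<^sup>2)"
  define X2 where "X2 = pr2 P * x2 / ((psK2 P)\<^sup>2 * K2 P u2)"
  define Y2 where "Y2 = pe P * x1 * acoef P u1 u2 / ((psa P)\<^sup>2 * D\<^sup>2)"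
  have "0 < D"
    using pos assms by (simp add: D_def acoef_pos add_pos_pos)
  then have XY: "0 < X1" "0 < Y1" "0 < X2" "0 < Y2"
    using pos assms by (simp_all add: X1_def Y1_def X2_def Y2_def K1_pos K2_pos acoef_pos)
  have "- (pr1 P * x1 * u1) / ((psK1 P)\<^sup>2 * K1 P u1) + (u1 - u2) * x2 * acoef P u1 u2 / ((psa P)\<^sup>2 * D\<^sup>2) = 0"
       "- (pr2 P * x2 * u2) / ((psK2 P)\<^sup>2 * K2 P u2) + pe P * (u1 - u2) * x1 * acoef P u1 u2 / ((psa P)\<^sup>2 * D\<^sup>2) = 0"
    using eq pos unfolding is_equilibrium_def field_eq D_def[symmetric] by (simp_all add: zero_prod_def)
  then have selection: "u1 * X1 = (u1 - u2) * Y1" "u2 * X2 = (u1 - u2) * Y2"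
    by (simp_all add: X1_def Y1_def X2_def Y2_def field_simps)
  show ?thesis
  proof (cases "u1 = u2")
    case True
    then show ?thesis
      using selection XY by simp
  next
    case False
    have "(u1 * u2) * (X1 * X2) = (u1 - u2)\<^sup>2 * (Y1 * Y2)"
      using selection by (simp add: power2_eq_square) (metis mult.assoc mult.commute)
    also have "\<dots> > 0"
      using False XY by simp
    finally have "0 < u1 * u2"
      using zero_less_mult_pos2 mult_pos_pos[OF XY(1,3)] by blast
    then show ?thesis
      by simp
  qed
qed

lemma ESS_equilibria:
  assumes P: "positive_params P" and ess: "ESS P x1 x2 u1 u2"
  shows "(x1 = pK01 P \<and> x2 = 0 \<or> 0 < x1 \<and> 0 < x2) \<and> u1 = 0 \<and> u2 = 0"
proof -
  note pos = positive_paramsD[OF P]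
  have eq: "is_equilibrium P (x1, x2, u1, u2)" and "loc_asym_stable P (x1, x2, u1, u2)"
    and "0 \<le> x1" "0 \<le> x2" and G1_max: "\<And>v. G1 P v u1 u2 x1 x2 \<le> G1 P u1 u1 u2 x1 x2"
    using ess unfolding ESS_def by auto
  show ?thesis
  proof (cases "x2 = 0")
    case True
    then have "x1 \<noteq> 0"
      using \<open>loc_asym_stable P (x1, x2, u1, u2)\<close> not_loc_asym_stable_extinction by blast
    with True eq \<open>0 \<le> x1\<close> show ?thesis
      using predator_free_equilibrium[OF P, of x1 u1 u2] by simp
  next
    case False
    then have "0 < x2"
      using \<open>0 \<le> x2\<close> by simp
    have no_gain: False if "\<bar>u1 - u2\<bar> < \<bar>v - u2\<bar>" "x1 / K1 P v \<le> x1 / K1 P u1" for v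
      using G1_gain_from_weaker_predation[OF pos(5,6,9,7) \<open>0 \<le> x1\<close> \<open>0 < x2\<close> that] G1_max[of v]
      by simp
    have "x1 \<noteq> 0"
      using no_gain[of "u2 + \<bar>u1 - u2\<bar> + 1"] by auto
    then have "0 < x1"
      using \<open>0 \<le> x1\<close> by simp
    have "\<not> 0 < u1 * u2"
    proof
      assume "0 < u1 * u2"
      then have "(u1 - u2)\<^sup>2 < (- u1 - u2)\<^sup>2"
        by (simp add: power2_eq_square algebra_simps)
      then have "\<bar>u1 - u2\<bar> < \<bar>- u1 - u2\<bar>"
        by (metis abs_le_square_iff not_le)
      then show False
        using no_gain[of "- u1"] by (simp add: K1_def)
    qed
    then show ?thesis
      using coexistence_equilibrium_traits[OF P eq \<open>0 < x1\<close> \<open>0 < x2\<close>] \<open>0 < x1\<close> \<open>0 < x2\<close>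
      by simp
  qed
qed

section \<open>Fitness at the zero strategy\<close>

lemma G2_le_zero_strategy:
  assumes "0 < pK02 P" "0 < pa0 P" "0 < ph P" "0 < pe P" "0 < pr2 P" "0 \<le> x1" "0 \<le> x2"
  shows "G2 P v 0 0 x1 x2 \<le> G2 P 0 0 0 x1 x2"
proof -
  have "acoef P 0 v * x1 / (1 + ph P * (acoef P 0 v * x1)) \<le> pa0 P * x1 / (1 + ph P * (pa0 P * x1))"
    using assms acoef_pos[of P 0 v] acoef_le[of P 0 v]
    by (intro holling_mono mult_right_mono) simp_all
  from mult_left_mono[OF this, of "pe P"]
  have "pe P * acoef P 0 v * x1 / (1 + ph P * acoef P 0 v * x1) \<le> pe P * pa0 P * x1 / (1 + ph P * pa0 P * x1)"
    using assms by (simp add: ac_simps)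
  moreover have "x2 / pK02 P \<le> x2 / K2 P v"
    using assms K2_le[of P v] K2_pos[of P v] by (simp add: frac_le)
  then have "pr2 P * (1 - x2 / K2 P v) \<le> pr2 P * (1 - x2 / pK02 P)"
    using assms by simp
  ultimately show ?thesis
    by (simp add: G2_def)
qed

text \<open>Both Gaussians are linearised in \<open>t = v\<^sup>2\<close> via \<open>exp s \<ge> 1 + s\<close>; the hypothesis
  \<open>curvature\<close> compares the two resulting slopes.\<close>
lemma G1_le_zero_strategy:
  assumes pos: "0 < pK01 P" "0 < psK1 P" "0 < pa0 P" "0 < psa P" "0 < pr1 P" "0 < ph P"
    and "0 \<le> x1" "0 \<le> x2"
    and curvature: "x2 * pa0 P * pK01 P * (psK1 P)\<^sup>2 \<le> (psa P)\<^sup>2 * pr1 P * x1"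
  shows "G1 P v 0 0 x1 x2 \<le> G1 P 0 0 0 x1 x2"
proof -
  define t where "t = v\<^sup>2"
  define X where "X = exp (t / (2 * (psK1 P)\<^sup>2))"
  define Y where "Y = exp (- (t / (2 * (psa P)\<^sup>2)))"
  define Da where "Da = 1 + ph P * pa0 P * x1"
  define Db where "Db = 1 + ph P * (pa0 P * Y) * x1"
  have "0 \<le> t" "0 < Y" "Y \<le> 1"
    using pos by (simp_all add: t_def Y_def)
  have X_ge: "1 + t / (2 * (psK1 P)\<^sup>2) \<le> X"
    unfolding X_def by (rule exp_ge_add_one_self)
  have Y_ge: "1 - t / (2 * (psa P)\<^sup>2) \<le> Y"
    unfolding Y_def using exp_ge_add_one_self[of "- (t / (2 * (psa P)\<^sup>2))"] by simp
  have "1 \<le> Da" "1 \<le> Db"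
    using pos \<open>0 \<le> x1\<close> \<open>0 < Y\<close> by (simp_all add: Da_def Db_def)
  have "pa0 P / Da - pa0 P * Y / Db = pa0 P * (1 - Y) / (Da * Db)"
    using \<open>1 \<le> Da\<close> \<open>1 \<le> Db\<close> by (simp add: Da_def Db_def field_simps)
  also have "\<dots> \<le> pa0 P * (1 - Y)"
  proof -
    have "1 \<le> Da * Db"
      using mult_mono[of 1 Da 1 Db] \<open>1 \<le> Da\<close> \<open>1 \<le> Db\<close> by simp
    then show ?thesis
      using divide_left_mono[of 1 "Da * Db" "pa0 P * (1 - Y)"] pos \<open>Y \<le> 1\<close> by simp
  qed
  also have "\<dots> \<le> pa0 P * (t / (2 * (psa P)\<^sup>2))"
    using Y_ge pos by (intro mult_left_mono) simp_all
  finally have predation: "x2 * (pa0 P / Da - pa0 P * Y / Db) \<le> x2 * (pa0 P * (t / (2 * (psa P)\<^sup>2)))"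
    using \<open>0 \<le> x2\<close> by (intro mult_left_mono)
  have "x2 * pa0 P * pK01 P * (psK1 P)\<^sup>2 * t \<le> (psa P)\<^sup>2 * pr1 P * x1 * t"
    using curvature \<open>0 \<le> t\<close> by (intro mult_right_mono)
  then have "x2 * (pa0 P * (t / (2 * (psa P)\<^sup>2))) \<le> pr1 P * x1 * (t / (2 * (psK1 P)\<^sup>2)) / pK01 P"
    using pos by (simp add: field_simps)
  also have "\<dots> \<le> pr1 P * x1 * (X - 1) / pK01 P"
    using X_ge pos \<open>0 \<le> x1\<close> by (intro divide_right_mono mult_left_mono) auto
  finally have "x2 * (pa0 P / Da - pa0 P * Y / Db) \<le> pr1 P * x1 * (X - 1) / pK01 P"
    using predation by linarith
  moreover have "K1 P v = pK01 P / X" "acoef P v 0 = pa0 P * Y"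
    by (simp_all add: K1_def acoef_def X_def Y_def t_def exp_minus field_simps)
  then have "G1 P 0 0 0 x1 x2 - G1 P v 0 0 x1 x2
      = pr1 P * x1 * (X - 1) / pK01 P - x2 * (pa0 P / Da - pa0 P * Y / Db)"
    using pos by (simp add: G1_def Da_def Db_def field_simps)
  ultimately show ?thesis
    by linarith
qed

lemma prey_isocline:
  assumes "0 < pK01 P" "0 < pa0 P" "0 < ph P" "0 \<le> x1" "G1 P 0 0 0 x1 x2 = 0"
  shows "pa0 P * x2 = pr1 P * (1 - x1 / pK01 P) * (1 + ph P * pa0 P * x1)"
proof -
  have "0 < 1 + ph P * pa0 P * x1"
    using assms by (simp add: add_pos_nonneg)
  with assms show ?thesis
    by (simp add: G1_def field_simps)
qed

lemma prey_below_capacity_on_isocline: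
  assumes "0 < pK01 P" "0 < pa0 P" "0 < ph P" "0 < pr1 P" "0 \<le> x1" "0 < x2"
    and "G1 P 0 0 0 x1 x2 = 0"
  shows "x1 < pK01 P"
proof -
  have "0 < pa0 P * x2"
    using assms by simp
  with prey_isocline[of P x1 x2] assms
  have "0 < pr1 P * (1 - x1 / pK01 P) * (1 + ph P * pa0 P * x1)"
    by simp
  moreover have "0 < 1 + ph P * pa0 P * x1"
    using assms by (simp add: add_pos_nonneg)
  ultimately have "0 < 1 - x1 / pK01 P"
    using assms by (simp add: zero_less_mult_iff)
  with assms show ?thesis
    by (simp add: field_simps)
qed

lemma prey_isocline_strict_antimono:
  fixes K h a y z :: real
  assumes "0 \<le> y" "y < z" "h * a * K < 1" "0 < K" "0 < h" "0 < a"
  shows "(1 - z / K) * (1 + h * a * z) < (1 - y / K) * (1 + h * a * y)"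
proof -
  have "(1 - y / K) * (1 + h * a * y) - (1 - z / K) * (1 + h * a * z)
      = (z - y) * ((1 / K - h * a) + h * a * (y + z) / K)"
    using assms by (simp add: field_simps)
  moreover have "0 < 1 / K - h * a" "0 \<le> h * a * (y + z) / K"
    using assms by (simp_all add: field_simps)
  ultimately show ?thesis
    using assms by (smt (verit) mult_pos_pos)
qed

lemma G2_strict_mono_on_prey_isocline:
  assumes "0 < pK01 P" "0 < pK02 P" "0 < pa0 P" "0 < pr1 P" "0 < pr2 P" "0 < ph P" "0 < pe P"
    and hK: "ph P * pa0 P * pK01 P < 1" and "0 \<le> x1" "x1 < y1"
    and "G1 P 0 0 0 x1 x2 = 0" "G1 P 0 0 0 y1 y2 = 0"
  shows "G2 P 0 0 0 x1 x2 < G2 P 0 0 0 y1 y2"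
proof -
  have "pr1 P * ((1 - y1 / pK01 P) * (1 + ph P * pa0 P * y1))
      < pr1 P * ((1 - x1 / pK01 P) * (1 + ph P * pa0 P * x1))"
    using assms by (intro mult_strict_left_mono prey_isocline_strict_antimono) simp_all
  then have "pa0 P * y2 < pa0 P * x2"
    using prey_isocline[of P x1 x2] prey_isocline[of P y1 y2] assms by (simp add: mult.assoc)
  then have "pr2 P * (1 - x2 / pK02 P) < pr2 P * (1 - y2 / pK02 P)"
    using assms by (simp add: divide_strict_right_mono)
  moreover have "x1 / (1 + ph P * pa0 P * x1) \<le> y1 / (1 + ph P * pa0 P * y1)"
    using assms holling_mono[of x1 y1 "ph P * pa0 P"] by (simp add: ac_simps)
  from mult_left_mono[OF this, of "pe P * pa0 P"]
  have "pe P * pa0 P * x1 / (1 + ph P * pa0 P * x1) \<le> pe P * pa0 P * y1 / (1 + ph P * pa0 P * y1)"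
    using assms by (simp add: mult.assoc)
  ultimately show ?thesis
    by (simp add: G2_def)
qed

lemma zero_fitness_point_unique:
  assumes "0 < pK01 P" "0 < pK02 P" "0 < pa0 P" "0 < pr1 P" "0 < pr2 P" "0 < ph P" "0 < pe P"
    and hK: "ph P * pa0 P * pK01 P < 1" and "0 \<le> x1" "0 \<le> y1"
    and "G1 P 0 0 0 x1 x2 = 0" "G2 P 0 0 0 x1 x2 = 0" "G1 P 0 0 0 y1 y2 = 0" "G2 P 0 0 0 y1 y2 = 0"
  shows "x1 = y1 \<and> x2 = y2"
proof -
  have "x1 = y1"
    using G2_strict_mono_on_prey_isocline[of P x1 y1 x2 y2]
      G2_strict_mono_on_prey_isocline[of P y1 x1 y2 x2] assms
    by (cases x1 y1 rule: linorder_cases) simp_all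
  then have "pa0 P * x2 = pa0 P * y2"
    using prey_isocline[of P x1 x2] prey_isocline[of P y1 y2] assms by simp
  with \<open>x1 = y1\<close> \<open>0 < pa0 P\<close> show ?thesis
    by simp
qed

section \<open>Stability of the candidate equilibria\<close>

lemma loc_asym_stable_predator_free:
  assumes P: "positive_params P" and invasion_fails: "G2 P 0 0 0 (pK01 P) 0 < 0"
  shows "loc_asym_stable P (pK01 P, 0, 0, 0)"
proof -
  note pos = positive_paramsD[OF P]
  define K where "K = pK01 P"
  define D where "D = 1 + ph P * pa0 P * K"
  define g where "g = - G2 P 0 0 0 K 0"
  define B where "B = K * pa0 P / D"
  define s where "s = (ps1 P)\<^sup>2 * pr1 P / (psK1 P)\<^sup>2"
  define E where "E = (ps2 P)\<^sup>2 * pe P * K * pa0 P / ((psa P)\<^sup>2 * D\<^sup>2)"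
  have "0 < K" "0 < D"
    using pos by (simp_all add: K_def D_def add_pos_pos)
  have "0 < g" "0 < s" "0 < E"
    using pos invasion_fails \<open>0 < K\<close> \<open>0 < D\<close> by (simp_all add: g_def s_def E_def K_def)
  have J: "field_jacobian P K 0 (z1, z2, z3, z4) = (- pr1 P * z1 - B * z2, - g * z2, - s * z3, E * (z3 - z4))"
    for z1 z2 z3 z4
    using pos \<open>0 < K\<close> \<open>0 < D\<close>
    by (simp add: field_jacobian_def Let_def D_def[symmetric] G1_def K_def g_def B_def s_def E_def)
      (simp add: algebra_simps D_def K_def)
  have eq: "is_equilibrium P (K, 0, 0, 0)"
    using \<open>0 < K\<close> by (simp add: is_equilibrium_def field_eq zero_prod_def K_def)
  have deriv: "(field P has_derivative field_jacobian P K 0) (at (K, 0, 0, 0))"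
    using pos \<open>0 < K\<close> by (intro has_derivative_field) simp_all
  \<comment> \<open>Both blocks are triangular; the trait block is treated with its coordinates swapped.\<close>
  have neg_def: "diag_form (1, B\<^sup>2 / (pr1 P * g) + 1, (- E)\<^sup>2 / (E * s) + 1, 1) (z1, z2, z3, z4)
        (field_jacobian P K 0 (z1, z2, z3, z4))
      \<le> - (pr1 P / 2 * z1\<^sup>2 + g * z2\<^sup>2 + s * z3\<^sup>2 + E / 2 * z4\<^sup>2)" for z1 z2 z3 z4
    using triangular_quadratic_lyapunov[of "pr1 P" g z1 B z2]
      triangular_quadratic_lyapunov[of E s z4 "- E" z3] pos \<open>0 < g\<close> \<open>0 < s\<close> \<open>0 < E\<close>
    by (simp add: J algebra_simps)
  have "0 < B\<^sup>2 / (pr1 P * g) + 1"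
    using pos \<open>0 < g\<close> by (simp add: add_nonneg_pos)
  then show ?thesis
    using loc_asym_stable_if_diag_lyapunov[OF eq deriv _ _ _ _ _ _ _ _ neg_def]
      pos \<open>0 < g\<close> \<open>0 < s\<close> \<open>0 < E\<close>
    by (simp add: K_def add_pos_nonneg)
qed

lemma coexistence_zero_fitness:
  assumes "is_equilibrium P (x1, x2, 0, 0)" "0 < x1" "0 < x2"
  shows "G1 P 0 0 0 x1 x2 = 0" "G2 P 0 0 0 x1 x2 = 0"
  using assms by (simp_all add: is_equilibrium_def field_eq zero_prod_def G1_def G2_def)

lemma coexistence_prey_self_regulation:
  assumes "0 < pK01 P" "0 < pa0 P" "0 < ph P" "0 < pr1 P" and hK: "ph P * pa0 P * pK01 P < 1"
    and "0 \<le> x1" "G1 P 0 0 0 x1 x2 = 0"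
  shows "ph P * (pa0 P)\<^sup>2 * x2 / (1 + ph P * pa0 P * x1)\<^sup>2 < pr1 P / pK01 P"
proof -
  define D where "D = 1 + ph P * pa0 P * x1"
  have "0 < D"
    using assms by (simp add: D_def add_pos_nonneg)
  have "ph P * (pa0 P)\<^sup>2 * x2 / D\<^sup>2 = ph P * pa0 P * (pa0 P * x2) / D\<^sup>2"
    by (simp add: power2_eq_square)
  also have "\<dots> = ph P * pa0 P * (pr1 P * (1 - x1 / pK01 P) * D) / D\<^sup>2"
    using prey_isocline[of P x1 x2] assms by (simp add: D_def)
  also have "\<dots> = pr1 P * (ph P * pa0 P * (pK01 P - x1)) / (pK01 P * D)"
    using assms \<open>0 < D\<close> by (simp add: power2_eq_square field_simps)
  also have "\<dots> < pr1 P * D / (pK01 P * D)"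
  proof -
    have "ph P * pa0 P * (pK01 P - x1) < D"
    proof -
      have "0 \<le> x1 * (pa0 P * (ph P * 2))"
        using assms by simp
      then show ?thesis
        using hK by (simp add: D_def algebra_simps)
    qed
    then show ?thesis
      using assms \<open>0 < D\<close> by (intro divide_strict_right_mono mult_strict_left_mono) simp_all
  qed
  finally show ?thesis
    using \<open>0 < D\<close> by (simp add: D_def)
qed

lemma loc_asym_stable_coexistence:
  assumes P: "positive_params P" and eq: "is_equilibrium P (x1, x2, 0, 0)" and "0 < x1" "0 < x2"
    and hK: "ph P * pa0 P * pK01 P < 1"
    and curvature: "x2 * pa0 P * pK01 P * (psK1 P)\<^sup>2 < (psa P)\<^sup>2 * pr1 P * x1"
  shows "loc_asym_stable P (x1, x2, 0, 0)"
proof -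
  note pos = positive_paramsD[OF P]
  note G_zero = coexistence_zero_fitness[OF eq \<open>0 < x1\<close> \<open>0 < x2\<close>]
  define D where "D = 1 + ph P * pa0 P * x1"
  define \<alpha> where "\<alpha> = x1 * (pr1 P / pK01 P - ph P * (pa0 P)\<^sup>2 * x2 / D\<^sup>2)"
  define \<beta> where "\<beta> = x1 * pa0 P / D"
  define \<gamma> where "\<gamma> = x2 * pe P * pa0 P / D\<^sup>2"
  define \<delta> where "\<delta> = x2 * pr2 P / pK02 P"
  define k1 where "k1 = pr1 P * x1 / ((psK1 P)\<^sup>2 * pK01 P)"
  define m where "m = x2 * pa0 P / ((psa P)\<^sup>2 * D\<^sup>2)"
  define k2 where "k2 = pr2 P * x2 / ((psK2 P)\<^sup>2 * pK02 P)"
  define n where "n = pe P * x1 * pa0 P / ((psa P)\<^sup>2 * D\<^sup>2)"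
  define s1 where "s1 = (ps1 P)\<^sup>2"
  define s2 where "s2 = (ps2 P)\<^sup>2"
  have "1 \<le> D"
    using pos \<open>0 < x1\<close> by (simp add: D_def)
  have "0 < \<alpha>"
    using coexistence_prey_self_regulation[OF pos(1,5,9,7) hK _ G_zero(1)] \<open>0 < x1\<close>
    by (simp add: \<alpha>_def D_def)
  have "0 < \<beta>" "0 < \<gamma>" "0 < \<delta>" "0 < k2" "0 < n" "0 < m" "0 < s1" "0 < s2"
    using pos \<open>0 < x1\<close> \<open>0 < x2\<close> \<open>1 \<le> D\<close>
    by (simp_all add: \<beta>_def \<gamma>_def \<delta>_def k2_def n_def m_def s1_def s2_def)
  have "m \<le> x2 * pa0 P / (psa P)\<^sup>2"
    unfolding m_def using pos \<open>0 < x2\<close> \<open>1 \<le> D\<close>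
    by (intro divide_left_mono mult_left_mono) (simp_all add: one_le_power)
  also have "\<dots> < k1"
    using curvature pos by (simp add: k1_def field_simps)
  finally have "m < k1" .
  have J: "field_jacobian P x1 x2 (z1, z2, z3, z4) = (- \<alpha> * z1 - \<beta> * z2, \<gamma> * z1 - \<delta> * z2,
      s1 * (- k1 * z3 + m * (z3 - z4)), s2 * (- k2 * z4 + n * (z3 - z4)))" for z1 z2 z3 z4
    using pos by (simp add: field_jacobian_def Let_def D_def[symmetric] G_zero)
      (simp add: \<alpha>_def \<beta>_def \<gamma>_def \<delta>_def k1_def m_def k2_def n_def s1_def s2_def algebra_simps)
  have deriv: "(field P has_derivative field_jacobian P x1 x2) (at (x1, x2, 0, 0))"
    using pos \<open>0 < x1\<close> by (intro has_derivative_field) simp_all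
  \<comment> \<open>These weights make the off-diagonal terms of both \<open>2 \<times> 2\<close> blocks cancel.\<close>
  have neg_def: "diag_form (\<gamma>, \<beta>, s2 * n, s1 * m) (z1, z2, z3, z4) (field_jacobian P x1 x2 (z1, z2, z3, z4))
      \<le> - (\<gamma> * \<alpha> * z1\<^sup>2 + \<beta> * \<delta> * z2\<^sup>2 + s1 * s2 * n * (k1 - m) * z3\<^sup>2 + s1 * s2 * m * (k2 + n) * z4\<^sup>2)"
    for z1 z2 z3 z4
    by (simp add: J power2_eq_square algebra_simps)
  show ?thesis
    using loc_asym_stable_if_diag_lyapunov[OF eq deriv _ _ _ _ _ _ _ _ neg_def]
      \<open>0 < \<alpha>\<close> \<open>0 < \<beta>\<close> \<open>0 < \<gamma>\<close> \<open>0 < \<delta>\<close> \<open>0 < k2\<close> \<open>0 < n\<close> \<open>0 < m\<close> \<open>0 < s1\<close> \<open>0 < s2\<close> \<open>m < k1\<close>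
    by simp
qed

section \<open>Uniqueness of the ESS\<close>

lemma G2_below_invasion_fitness:
  assumes "0 < pK01 P" "0 < pK02 P" "0 < pa0 P" "0 < pr1 P" "0 < pr2 P" "0 < ph P" "0 < pe P"
    and "0 \<le> x1" "0 < x2" "G1 P 0 0 0 x1 x2 = 0"
  shows "G2 P 0 0 0 x1 x2 < G2 P 0 0 0 (pK01 P) 0"
proof -
  have "x1 < pK01 P"
    using prey_below_capacity_on_isocline[of P x1 x2] assms by simp
  then have "x1 / (1 + ph P * pa0 P * x1) \<le> pK01 P / (1 + ph P * pa0 P * pK01 P)"
    using assms by (intro holling_mono) simp_all
  from mult_left_mono[OF this, of "pe P * pa0 P"]
  have "pe P * pa0 P * x1 / (1 + ph P * pa0 P * x1) \<le> pe P * pa0 P * pK01 P / (1 + ph P * pa0 P * pK01 P)"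
    using assms by simp
  moreover have "0 < pr2 P * x2 / pK02 P"
    using assms by simp
  moreover have "G2 P 0 0 0 x1 x2 = pe P * pa0 P * x1 / (1 + ph P * pa0 P * x1) - pd P + pr2 P - pr2 P * x2 / pK02 P"
    "G2 P 0 0 0 (pK01 P) 0 = pe P * pa0 P * pK01 P / (1 + ph P * pa0 P * pK01 P) - pd P + pr2 P"
    by (simp_all add: G2_def right_diff_distrib)
  ultimately show ?thesis
    by linarith
qed

lemma unique_ESS_predator_free:
  assumes P: "positive_params P"
    and invasion_fails: "pr2 P + pe P * pa0 P * pK01 P / (1 + pa0 P * ph P * pK01 P) < pd P"
  shows "unique_ESS P (pK01 P) 0 0 0"
proof -
  note pos = positive_paramsD[OF P]
  have G1_zero: "G1 P 0 0 0 (pK01 P) 0 = 0"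
    using pos by (simp add: G1_def)
  have G2_neg: "G2 P 0 0 0 (pK01 P) 0 < 0"
    using invasion_fails by (simp add: G2_def ac_simps)
  have "is_equilibrium P (pK01 P, 0, 0, 0)"
    using pos by (simp add: is_equilibrium_def field_eq zero_prod_def)
  moreover have "G1 P v 0 0 (pK01 P) 0 \<le> G1 P 0 0 0 (pK01 P) 0" for v
    using pos by (intro G1_le_zero_strategy) simp_all
  moreover have "G2 P v 0 0 (pK01 P) 0 \<le> G2 P 0 0 0 (pK01 P) 0" for v
    using pos by (intro G2_le_zero_strategy) simp_all
  ultimately have "ESS P (pK01 P) 0 0 0"
    using loc_asym_stable_predator_free[OF P G2_neg] G1_zero G2_neg pos
    by (simp add: ESS_def)
  moreover have "(y1, y2, w1, w2) = (pK01 P, 0, 0, 0)" if "ESS P y1 y2 w1 w2" for y1 y2 w1 w2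
  proof -
    have "\<not> (0 < y1 \<and> 0 < y2 \<and> w1 = 0 \<and> w2 = 0)"
    proof
      assume coexist: "0 < y1 \<and> 0 < y2 \<and> w1 = 0 \<and> w2 = 0"
      then have "G1 P 0 0 0 y1 y2 = 0" "G2 P 0 0 0 y1 y2 = 0"
        using that by (simp_all add: ESS_def)
      then show False
        using G2_below_invasion_fitness[of P y1 y2] G2_neg coexist pos by simp
    qed
    then show ?thesis
      using ESS_equilibria[OF P that] by auto
  qed
  ultimately show ?thesis
    unfolding unique_ESS_def by blast
qed

lemma prey_trait_curvature_bound:
  assumes P: "positive_params P" and "0 < x1" "0 < x2"
    and ratio: "psK2 P / psK1 P * sqrt (pr1 P * pe P * pK02 P / (pr2 P * pK01 P)) > x2 / x1"
    and width: "(psa P)\<^sup>2 / (psK1 P * psK2 P) > sqrt (pe P * pK01 P * pK02 P / (pr1 P * pr2 P)) * pa0 P"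
  shows "x2 * pa0 P * pK01 P * (psK1 P)\<^sup>2 < (psa P)\<^sup>2 * pr1 P * x1"
proof -
  note pos = positive_paramsD[OF P]
  define S where "S = sqrt (pr1 P * pe P * pK02 P / (pr2 P * pK01 P))"
  have "0 < S"
    using pos by (simp add: S_def)
  have "sqrt (pe P * pK01 P * pK02 P / (pr1 P * pr2 P)) = sqrt ((pK01 P / pr1 P)\<^sup>2 * (S\<^sup>2))"
    using pos by (simp add: S_def power2_eq_square field_simps)
  also have "\<dots> = pK01 P / pr1 P * S"
    using pos \<open>0 < S\<close> by (simp add: real_sqrt_mult)
  finally have width': "pK01 P / pr1 P * S * pa0 P < (psa P)\<^sup>2 / (psK1 P * psK2 P)"
    using width by simp
  have "S * (pK01 P * pa0 P * x2 / (pr1 P * x1)) = pK01 P / pr1 P * S * pa0 P * (x2 / x1)"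
    using pos \<open>0 < x1\<close> by (simp add: field_simps)
  also have "\<dots> < (psa P)\<^sup>2 / (psK1 P * psK2 P) * (psK2 P / psK1 P * S)"
    using pos \<open>0 < x1\<close> \<open>0 < x2\<close> \<open>0 < S\<close>
    by (intro mult_strict_mono width' ratio[folded S_def]) simp_all
  also have "\<dots> = S * ((psa P)\<^sup>2 / (psK1 P)\<^sup>2)"
    using pos by (simp add: power2_eq_square field_simps)
  finally have "pK01 P * pa0 P * x2 / (pr1 P * x1) < (psa P)\<^sup>2 / (psK1 P)\<^sup>2"
    by (rule mult_left_less_imp_less) (use \<open>0 < S\<close> in simp)
  then show ?thesis
    using pos \<open>0 < x1\<close> by (simp add: field_simps)
qed

lemma unique_ESS_coexistence:
  assumes P: "positive_params P" and eq: "is_equilibrium P (x1, x2, 0, 0)" and "0 < x1" "0 < x2"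
    and hK: "pK01 P * pa0 P < 1 / ph P"
    and ratio: "psK2 P / psK1 P * sqrt (pr1 P * pe P * pK02 P / (pr2 P * pK01 P)) > x2 / x1"
    and width: "(psa P)\<^sup>2 / (psK1 P * psK2 P) > sqrt (pe P * pK01 P * pK02 P / (pr1 P * pr2 P)) * pa0 P"
  shows "unique_ESS P x1 x2 0 0"
proof -
  note pos = positive_paramsD[OF P]
  note G_zero = coexistence_zero_fitness[OF eq \<open>0 < x1\<close> \<open>0 < x2\<close>]
  have hK': "ph P * pa0 P * pK01 P < 1"
    using hK pos by (simp add: field_simps)
  have curvature: "x2 * pa0 P * pK01 P * (psK1 P)\<^sup>2 < (psa P)\<^sup>2 * pr1 P * x1"
    using P \<open>0 < x1\<close> \<open>0 < x2\<close> ratio width by (rule prey_trait_curvature_bound)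
  have "G1 P v 0 0 x1 x2 \<le> G1 P 0 0 0 x1 x2" for v
    using pos \<open>0 < x1\<close> \<open>0 < x2\<close> curvature by (intro G1_le_zero_strategy) simp_all
  moreover have "G2 P v 0 0 x1 x2 \<le> G2 P 0 0 0 x1 x2" for v
    using pos \<open>0 < x1\<close> \<open>0 < x2\<close> by (intro G2_le_zero_strategy) simp_all
  ultimately have "ESS P x1 x2 0 0"
    using eq loc_asym_stable_coexistence[OF P eq \<open>0 < x1\<close> \<open>0 < x2\<close> hK' curvature]
      G_zero \<open>0 < x1\<close> \<open>0 < x2\<close> by (simp add: ESS_def)
  moreover have "(y1, y2, w1, w2) = (x1, x2, 0, 0)" if "ESS P y1 y2 w1 w2" for y1 y2 w1 w2
  proof -
    have "G2 P 0 0 0 (pK01 P) 0 > 0"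
      using G2_below_invasion_fitness[of P x1 x2] G_zero pos \<open>0 < x1\<close> \<open>0 < x2\<close> by simp
    then have "\<not> (y1 = pK01 P \<and> y2 = 0 \<and> w1 = 0 \<and> w2 = 0)"
      using that by (auto simp: ESS_def)
    then have "0 < y1" "0 < y2" "w1 = 0" "w2 = 0"
      using ESS_equilibria[OF P that] by auto
    moreover from this have "G1 P 0 0 0 y1 y2 = 0" "G2 P 0 0 0 y1 y2 = 0"
      using that by (simp_all add: ESS_def)
    ultimately show ?thesis
      using zero_fitness_point_unique[of P x1 y1 x2 y2] G_zero pos hK' \<open>0 < x1\<close> by simp
  qed
  ultimately show ?thesis
    unfolding unique_ESS_def by blast
qed

theorem theorem7:
  fixes P :: params
  assumes pos: "pK01 P > 0" "pK02 P > 0" "psK1 P > 0" "psK2 P > 0" "pa0 P > 0" "psa P > 0"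
      "pr1 P > 0" "pr2 P > 0" "ph P > 0" "pe P > 0" "ps1 P > 0" "ps2 P > 0"
    and d_nonneg: "pd P \<ge> 0"
  shows "(pr2 P + pe P * pa0 P * pK01 P / (1 + pa0 P * ph P * pK01 P) < pd P
            \<longrightarrow> unique_ESS P (pK01 P) 0 0 0)
       \<and> (\<forall>x1s x2s.
            psK2 P > psK1 P \<and> x1s > 0 \<and> x2s > 0 \<and> is_equilibrium P (x1s, x2s, 0, 0) \<and>
            pK02 P * pa0 P < pr1 P / (1 - pd P / pr2 P) \<and>
            pK01 P * pa0 P < 1 / ph P \<and>
            min (2 * pr2 P / pK02 P) (pr1 P / ((psK1 P)\<^sup>2 * pK01 P)) > pa0 P \<and>
            pr1 P * pr2 P / (pK01 P * pK02 P) + pe P * (pa0 P)\<^sup>2 / (1 + pa0 P * ph P * pK01 P) ^ 3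
              > (pa0 P)\<^sup>2 * ph P * pK02 P * (pr2 P + pe P / ph P) \<and>
            psK2 P / psK1 P * sqrt (pr1 P * pe P * pK02 P / (pr2 P * pK01 P)) > x2s / x1s \<and>
            (psa P)\<^sup>2 / (psK1 P * psK2 P) > sqrt (pe P * pK01 P * pK02 P / (pr1 P * pr2 P)) * pa0 P
          \<longrightarrow> unique_ESS P x1s x2s 0 0)"
proof -
  have P: "positive_params P"
    using pos by (simp add: positive_params_def)
  show ?thesis
    using unique_ESS_predator_free[OF P] unique_ESS_coexistence[OF P] by blast
qed

end
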